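(* Let $\mathcal{Y}=\{\mathsf{y}_1,\mathsf{y}_2,\mathsf{y}_3\}\subset\mathbb{R}^2$ be three non-collinear points and let $X_1,\dots,X_n$ be i.i.d. with the uniform distribution on the triangle $T(\mathcal{Y})$. Then for any $r\in[1,\infty]$ the distribution of the relative density $\rho(\mathcal{X}_n;h,N^r_{\mathcal{Y}})$ of the $r$-factor proximity catch digraph does not depend on $\mathcal{Y}$ (hence not on the geometry of $T(\mathcal{Y})$).
   Context: $T(\mathcal{Y})$ denotes the closed triangle (including interior) with vertices $\mathsf{y}_1,\mathsf{y}_2,\mathsf{y}_3$. Vertex regions: joining the center of mass of $T(\mathcal{Y})$ to the midpoints of its three edges partitions $T(\mathcal{Y})$ into regions $R(\mathsf{y}_1),R(\mathsf{y}_2),R(\mathsf{y}_3)$, with $R(\mathsf{y}_j)$ the one containing $\mathsf{y}_j$. $r$-factor proximity map: for $r\in[1,\infty)$ and $x\in T(\mathcal{Y})\setminus\mathcal{Y}$, let $v(x)$ be the vertex with $x\in R(v(x))$ (ties on region boundaries broken arbitrarily), $e(x)$ the edge opposite $v(x)$, $\ell(x)$ the line through $x$ parallel to $e(x)$, and $\ell_r(x)$ the line parallel to $e(x)$, on the same side of $v(x)$ as $x$, with $d(v(x),\ell_r(x))=r\,d(v(x),\ell(x))$. Let $T_r(x)$ be the triangle similar to and with the same orientation as $T(\mathcal{Y})$ having $v(x)$ as a vertex and $\ell_r(x)$ as the line of the opposite edge; set $N^r_{\mathcal{Y}}(x)=T_r(x)\cap T(\mathcal{Y})$. Also $N^\infty_{\mathcal{Y}}(x)=T(\mathcal{Y})$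 for $x\in T(\mathcal{Y})\setminus\mathcal{Y}$, and $N^r_{\mathcal{Y}}(x)=\{x\}$ for $x\in\mathcal{Y}$. Proximity catch digraph: vertex set $\{X_1,\dots,X_n\}$, with an arc $(X_i,X_j)$, $i\neq j$, iff $X_j\in N^r_{\mathcal{Y}}(X_i)$. Its relative density is $\rho(\mathcal{X}_n;h,N^r_{\mathcal{Y}})=|\mathcal{A}|/(n(n-1))$, where $|\mathcal{A}|$ is the number of arcs; equivalently $\frac{1}{n(n-1)}\sum_{i<j}h_{ij}$ with $h_{ij}=\mathbf{I}\{X_j\in N^r_{\mathcal{Y}}(X_i)\}+\mathbf{I}\{X_i\in N^r_{\mathcal{Y}}(X_j)\}$. *)

theory Defs
  imports "HOL-Probability.Probability"
begin

type_synonym pt = "real^2"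

definition tri :: "pt \<Rightarrow> pt \<Rightarrow> pt \<Rightarrow> pt set" where
  "tri y1 y2 y3 = convex hull {y1, y2, y3}"

definition centroid3 :: "pt \<Rightarrow> pt \<Rightarrow> pt \<Rightarrow> pt" where
  "centroid3 y1 y2 y3 = (1/3) *\<^sub>R (y1 + y2 + y3)"

definition midpt :: "pt \<Rightarrow> pt \<Rightarrow> pt" where
  "midpt a b = (1/2) *\<^sub>R (a + b)"

definition vregion :: "pt \<Rightarrow> pt \<Rightarrow> pt \<Rightarrow> pt set" where
  "vregion a b c = convex hull {a, midpt a b, centroid3 a b c, midpt a c}"

text \<open>Vertex v(x) and the two endpoints of the opposite edge e(x);
  ties on region boundaries are broken by the fixed order y1, y2, y3.\<close>
definition vsel :: "pt \<Rightarrow> pt \<Rightarrow> pt \<Rightarrow> pt \<Rightarrow> pt \<times> pt \<times> pt" where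
  "vsel y1 y2 y3 x =
     (if x \<in> vregion y1 y2 y3 then (y1, y2, y3)
      else if x \<in> vregion y2 y1 y3 then (y2, y1, y3)
      else (y3, y1, y2))"

definition par_line :: "pt \<Rightarrow> pt \<Rightarrow> pt \<Rightarrow> pt set" where
  "par_line p a b = {p + t *\<^sub>R (b - a) | t. True}"

text \<open>T_r(x) is the image of T(Y) under the homothety with centre v(x) and ratio
  d(v(x), l_r(x)) / d(v(x), e(x)) where d(v(x), l_r(x)) = r d(v(x), l(x)).\<close>
definition Nprox :: "ereal \<Rightarrow> pt \<Rightarrow> pt \<Rightarrow> pt \<Rightarrow> pt \<Rightarrow> pt set" where
  "Nprox r y1 y2 y3 x =
     (if x \<in> {y1, y2, y3} then {x}
      else if r = \<infinity> then tri y1 y2 y3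
      else (let (v, a, b) = vsel y1 y2 y3 x;
                k = real_of_ereal r * infdist v (par_line x a b) / infdist v (par_line a a b)
            in ((\<lambda>w. v + k *\<^sub>R (w - v)) ` tri y1 y2 y3) \<inter> tri y1 y2 y3))"

definition rel_density :: "ereal \<Rightarrow> pt \<Rightarrow> pt \<Rightarrow> pt \<Rightarrow> nat \<Rightarrow> (nat \<Rightarrow> pt) \<Rightarrow> real" where
  "rel_density r y1 y2 y3 n X =
     real (card {(i, j). i < n \<and> j < n \<and> i \<noteq> j \<and> X j \<in> Nprox r y1 y2 y3 (X i)})
     / (real n * (real n - 1))"

definition iid_uniform :: "pt \<Rightarrow> pt \<Rightarrow> pt \<Rightarrow> nat \<Rightarrow> (nat \<Rightarrow> pt) measure" where
  "iid_uniform y1 y2 y3 n = PiM {..<n} (\<lambda>_. uniform_measure lborel (tri y1 y2 y3))"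

end

theory Submission
  imports Defs
begin

text \<open>Any two non-degenerate triangles are related by an injective affine map \<open>f\<close>.
  Every ingredient of the proximity map is affine-equivariant: \<open>f\<close> maps vertex regions
  to vertex regions, commutes with homotheties, and preserves the ratio of the distances
  from a vertex to two lines parallel to the opposite edge (both are read off the same
  barycentric coordinate). Hence \<open>N\<^sup>r\<close> for \<open>f Y\<close> at \<open>f x\<close> is the \<open>f\<close>-image of
  \<open>N\<^sup>r\<close> for \<open>Y\<close> at \<open>x\<close>, and the digraphs on \<open>f X\<^sub>i\<close> and on \<open>X\<^sub>i\<close> coincide.
  As \<open>f\<close> has constant Jacobian, it pushes the uniform law on \<open>T(Y)\<close> to the uniform law
  on \<open>f T(Y)\<close>, so every triangle gives the law of the standard one.\<close>

definition cross2 :: "real^2 \<Rightarrow> real^2 \<Rightarrow> real" where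
  "cross2 u w = u$1 * w$2 - u$2 * w$1"

lemma cross2_decomposition:
  assumes "cross2 u w \<noteq> 0"
  shows "z = (cross2 z w / cross2 u w) *\<^sub>R u + (cross2 u z / cross2 u w) *\<^sub>R w"
proof -
  have "z $ 1 * cross2 u w = cross2 z w * u $ 1 + cross2 u z * w $ 1"
       "z $ 2 * cross2 u w = cross2 z w * u $ 2 + cross2 u z * w $ 2"
    unfolding cross2_def by algebra+
  then show ?thesis
    using assms unfolding vec_eq_iff forall_2 by (simp add: field_simps)
qed

lemma collinear_if_cross2_eq_0:
  assumes "cross2 (y2 - y1) (y3 - y1) = 0"
  shows "collinear {y1, y2, y3}"
proof -
  let ?u = "y2 - y1" and ?w = "y3 - y1"
  have "?w = (if ?u$1 \<noteq> 0 then ?w$1 / ?u$1 else ?w$2 / ?u$2) *\<^sub>R ?u" if "?u \<noteq> 0"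
    using that assms unfolding vec_eq_iff forall_2 cross2_def
    by (auto simp: field_simps)
  then have "collinear {0, ?u, ?w}"
    unfolding collinear_lemma by blast
  then have "collinear {y2, y1, y3}"
    by (subst collinear_3) simp_all
  then show ?thesis
    by (simp add: insert_commute)
qed

lemma par_line_eq_translation_span: "par_line p a b = (+) p ` span {b - a}"
  unfolding par_line_def span_singleton by auto

lemma closed_par_line: "closed (par_line p a b)"
  unfolding par_line_eq_translation_span
  by (intro closed_translation closed_subspace subspace_span)

lemma par_line_base: "p \<in> par_line p a b"
  unfolding par_line_def by (auto intro: exI[of _ 0])

lemma not_in_par_line_if_cross2_neq_0:
  assumes "cross2 (a - v) (b - a) \<noteq> 0"
  shows "v \<notin> par_line a a b"
proof
  assume "v \<in> par_line a a b"
  then obtain t where "v = a + t *\<^sub>R (b - a)"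
    unfolding par_line_def by auto
  then have "a - v = (-t) *\<^sub>R (b - a)"
    by (simp add: algebra_simps)
  then have "cross2 (a - v) (b - a) = 0"
    by (simp add: cross2_def)
  with assms show False
    by simp
qed

lemma infdist_homothety:
  fixes v :: "'a::real_normed_vector"
  assumes "s \<noteq> 0" "A \<noteq> {}"
  shows "infdist v ((\<lambda>u. v + s *\<^sub>R (u - v)) ` A) = \<bar>s\<bar> * infdist v A"
proof -
  let ?h = "\<lambda>u. v + s *\<^sub>R (u - v)"
  have dist_h: "dist v (?h u) = \<bar>s\<bar> * dist v u" for u
    by (simp add: dist_norm norm_minus_commute)
  have nonempty: "?h ` A \<noteq> {}"
    using assms by auto
  have lower: "\<bar>s\<bar> * infdist v A \<le> infdist v (?h ` A)"
    unfolding infdist_notempty[OF nonempty] image_image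
  proof (rule cINF_greatest[OF assms(2)])
    fix u assume "u \<in> A"
    then have "infdist v A \<le> dist v u"
      by (rule infdist_le)
    then show "\<bar>s\<bar> * infdist v A \<le> dist v (?h u)"
      unfolding dist_h by (simp add: mult_left_mono)
  qed
  have "infdist v (?h ` A) / \<bar>s\<bar> \<le> infdist v A"
    unfolding infdist_notempty[OF assms(2)]
  proof (rule cINF_greatest[OF assms(2)])
    fix u assume "u \<in> A"
    then have "infdist v (?h ` A) \<le> dist v (?h u)"
      by (intro infdist_le) auto
    then show "infdist v (?h ` A) / \<bar>s\<bar> \<le> dist v u"
      unfolding dist_h using assms(1) by (simp add: divide_le_eq mult.commute)
  qed
  then have "infdist v (?h ` A) \<le> \<bar>s\<bar> * infdist v A"
    using assms(1) by (simp add: divide_le_eq mult.commute)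
  with lower show ?thesis
    by linarith
qed

lemma par_line_eq_homothety:
  assumes "s \<noteq> 0" "x = v + s *\<^sub>R (a - v) + t *\<^sub>R (b - a)"
  shows "par_line x a b = (\<lambda>u. v + s *\<^sub>R (u - v)) ` par_line a a b"
proof (intro set_eqI iffI)
  fix q assume "q \<in> par_line x a b"
  then obtain \<tau> where q: "q = x + \<tau> *\<^sub>R (b - a)"
    unfolding par_line_def by auto
  have "s *\<^sub>R (a - v + ((\<tau> + t) / s) *\<^sub>R (b - a)) = s *\<^sub>R (a - v) + (\<tau> + t) *\<^sub>R (b - a)"
    using assms(1) by (simp add: scaleR_add_right)
  then have "q = v + s *\<^sub>R ((a + ((\<tau> + t) / s) *\<^sub>R (b - a)) - v)"
    unfolding q assms(2) by (simp add: algebra_simps)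
  then show "q \<in> (\<lambda>u. v + s *\<^sub>R (u - v)) ` par_line a a b"
    unfolding par_line_def by blast
next
  fix q assume "q \<in> (\<lambda>u. v + s *\<^sub>R (u - v)) ` par_line a a b"
  then obtain \<tau> where q: "q = v + s *\<^sub>R ((a + \<tau> *\<^sub>R (b - a)) - v)"
    unfolding par_line_def by auto
  then have "q = x + (s * \<tau> - t) *\<^sub>R (b - a)"
    unfolding q assms(2) by (simp add: algebra_simps)
  then show "q \<in> par_line x a b"
    unfolding par_line_def by blast
qed

lemma infdist_par_line_ratio:
  assumes "x - v = s *\<^sub>R (a - v) + t *\<^sub>R (b - a)" "v \<notin> par_line a a b"
  shows "infdist v (par_line x a b) / infdist v (par_line a a b) = \<bar>s\<bar>"
proof (cases "s = 0")
  case True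
  then have "v = x + (-t) *\<^sub>R (b - a)"
    using assms(1) by (simp add: algebra_simps)
  then have "v \<in> par_line x a b"
    unfolding par_line_def by blast
  then show ?thesis
    using True by simp
next
  case False
  have "infdist v (par_line a a b) > 0"
    using infdist_pos_not_in_closed[OF closed_par_line _ assms(2)] par_line_base[of a a b]
    by blast
  moreover have "x = v + s *\<^sub>R (a - v) + t *\<^sub>R (b - a)"
    using assms(1) by (simp add: algebra_simps)
  then have "infdist v (par_line x a b) = \<bar>s\<bar> * infdist v (par_line a a b)"
    using infdist_homothety[OF False, of "par_line a a b" v] par_line_base[of a a b]
    by (auto simp: par_line_eq_homothety[OF False])
  ultimately show ?thesis
    by simp
qed

definition aff_map :: "('a::real_vector \<Rightarrow> 'b::real_vector) \<Rightarrow> 'b \<Rightarrow> 'a \<Rightarrow> 'b" where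
  "aff_map L c p = L p + c"

lemma aff_map_image: "aff_map L c ` S = (+) c ` L ` S"
  unfolding aff_map_def by (auto simp: image_iff add.commute)

lemma aff_map_convex_hull:
  "linear L \<Longrightarrow> aff_map L c ` (convex hull S) = convex hull (aff_map L c ` S)"
  unfolding aff_map_image by (simp add: convex_hull_linear_image convex_hull_translation)

lemma aff_map_homothety:
  "linear L \<Longrightarrow>
     aff_map L c (v + k *\<^sub>R (w - v)) = aff_map L c v + k *\<^sub>R (aff_map L c w - aff_map L c v)"
  unfolding aff_map_def by (simp add: linear_add linear_diff linear_scale algebra_simps)

lemma aff_map_diff: "linear L \<Longrightarrow> aff_map L c x - aff_map L c v = L (x - v)"
  unfolding aff_map_def by (simp add: linear_diff)

lemma inj_aff_map: "inj L \<Longrightarrow> inj (aff_map L c)"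
  unfolding aff_map_def inj_def by auto

lemma continuous_aff_map: "linear L \<Longrightarrow> continuous_on UNIV (aff_map L c)"
  for L :: "'a::euclidean_space \<Rightarrow> 'b::real_normed_vector"
  unfolding aff_map_def
  by (intro continuous_intros linear_continuous_on) (simp add: linear_conv_bounded_linear[symmetric])

lemma tri_aff_map: "linear L \<Longrightarrow> tri (aff_map L c a) (aff_map L c b) (aff_map L c d) = aff_map L c ` tri a b d"
  unfolding tri_def by (simp add: aff_map_convex_hull)

lemma vregion_aff_map:
  assumes "linear L"
  shows "vregion (aff_map L c a) (aff_map L c b) (aff_map L c d) = aff_map L c ` vregion a b d"
proof -
  have "aff_map L c (midpt p q) = midpt (aff_map L c p) (aff_map L c q)" for p q
    using assms unfolding aff_map_def midpt_def by (simp add: vec_eq_iff linear_add linear_scale algebra_simps)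
  moreover have "aff_map L c (centroid3 a b d) = centroid3 (aff_map L c a) (aff_map L c b) (aff_map L c d)"
    using assms unfolding aff_map_def centroid3_def by (simp add: vec_eq_iff linear_add linear_scale algebra_simps)
  ultimately show ?thesis
    unfolding vregion_def using assms by (simp add: aff_map_convex_hull)
qed

lemma vsel_aff_map:
  assumes "linear L" "inj L"
  shows "vsel (aff_map L c y1) (aff_map L c y2) (aff_map L c y3) (aff_map L c x) =
         map_prod (aff_map L c) (map_prod (aff_map L c) (aff_map L c)) (vsel y1 y2 y3 x)"
  unfolding vsel_def vregion_aff_map[OF assms(1)] inj_image_mem_iff[OF inj_aff_map[OF assms(2)]]
  by simp

lemma vsel_cases: "vsel y1 y2 y3 x \<in> {(y1, y2, y3), (y2, y1, y3), (y3, y1, y2)}"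
  unfolding vsel_def by auto

lemma cross2_vsel_neq_0:
  assumes "cross2 (y2 - y1) (y3 - y1) \<noteq> 0" "(v, a, b) \<in> {(y1, y2, y3), (y2, y1, y3), (y3, y1, y2)}"
  shows "cross2 (a - v) (b - a) \<noteq> 0"
proof -
  have "cross2 (y2 - y1) (y3 - y2) = cross2 (y2 - y1) (y3 - y1)"
       "cross2 (y1 - y2) (y3 - y1) = - cross2 (y2 - y1) (y3 - y1)"
       "cross2 (y1 - y3) (y2 - y1) = cross2 (y2 - y1) (y3 - y1)"
    unfolding cross2_def by (simp_all add: algebra_simps)
  with assms show ?thesis by auto
qed

lemma aff_map_not_in_par_line:
  assumes "linear L" "inj L" "v \<notin> par_line a a b"
  shows "aff_map L c v \<notin> par_line (aff_map L c a) (aff_map L c a) (aff_map L c b)"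
proof
  assume "aff_map L c v \<in> par_line (aff_map L c a) (aff_map L c a) (aff_map L c b)"
  then obtain t where "aff_map L c v = aff_map L c (a + t *\<^sub>R (b - a))"
    unfolding par_line_def aff_map_homothety[OF assms(1)] by auto
  then have "v = a + t *\<^sub>R (b - a)"
    using inj_aff_map[OF assms(2)] by (auto dest: injD)
  with assms(3) show False
    unfolding par_line_def by blast
qed

lemma infdist_par_line_ratio_aff_map:
  assumes "linear L" "inj L" "cross2 (a - v) (b - a) \<noteq> 0"
  shows "infdist (aff_map L c v) (par_line (aff_map L c x) (aff_map L c a) (aff_map L c b)) /
         infdist (aff_map L c v) (par_line (aff_map L c a) (aff_map L c a) (aff_map L c b))
       = infdist v (par_line x a b) / infdist v (par_line a a b)"
proof -
  define s where "s = cross2 (x - v) (b - a) / cross2 (a - v) (b - a)"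
  define t where "t = cross2 (a - v) (x - v) / cross2 (a - v) (b - a)"
  have x: "x - v = s *\<^sub>R (a - v) + t *\<^sub>R (b - a)"
    unfolding s_def t_def by (rule cross2_decomposition[OF assms(3)])
  then have x': "aff_map L c x - aff_map L c v
      = s *\<^sub>R (aff_map L c a - aff_map L c v) + t *\<^sub>R (aff_map L c b - aff_map L c a)"
    using assms(1) by (simp add: aff_map_diff linear_add linear_scale)
  have v: "v \<notin> par_line a a b"
    by (rule not_in_par_line_if_cross2_neq_0[OF assms(3)])
  show ?thesis
    using infdist_par_line_ratio[OF x v]
      infdist_par_line_ratio[OF x' aff_map_not_in_par_line[OF assms(1,2) v]]
    by simp
qed

lemma Nprox_aff_map:
  assumes "linear L" "inj L" "cross2 (y2 - y1) (y3 - y1) \<noteq> 0"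
  shows "Nprox r (aff_map L c y1) (aff_map L c y2) (aff_map L c y3) (aff_map L c x)
       = aff_map L c ` Nprox r y1 y2 y3 x"
proof -
  let ?f = "aff_map L c"
  have inj: "inj ?f"
    by (rule inj_aff_map[OF assms(2)])
  obtain v a b where vs: "vsel y1 y2 y3 x = (v, a, b)"
    by (metis prod_cases3)
  have vs': "vsel (?f y1) (?f y2) (?f y3) (?f x) = (?f v, ?f a, ?f b)"
    using vsel_aff_map[OF assms(1,2)] vs by simp
  have "cross2 (a - v) (b - a) \<noteq> 0"
    using cross2_vsel_neq_0[OF assms(3)] vsel_cases[of y1 y2 y3 x] vs by simp
  define k where "k = real_of_ereal r * infdist v (par_line x a b) / infdist v (par_line a a b)"
  have ratio: "real_of_ereal r * infdist (?f v) (par_line (?f x) (?f a) (?f b))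
        / infdist (?f v) (par_line (?f a) (?f a) (?f b)) = k"
    using infdist_par_line_ratio_aff_map[OF assms(1,2) \<open>cross2 (a - v) (b - a) \<noteq> 0\<close>]
    unfolding k_def by (metis times_divide_eq_right)
  have homothety: "(\<lambda>w. ?f v + k *\<^sub>R (w - ?f v)) ` tri (?f y1) (?f y2) (?f y3)
      = ?f ` ((\<lambda>w. v + k *\<^sub>R (w - v)) ` tri y1 y2 y3)"
    unfolding tri_aff_map[OF assms(1)] image_image aff_map_homothety[OF assms(1)] by simp
  have vertex: "?f x \<in> {?f y1, ?f y2, ?f y3} \<longleftrightarrow> x \<in> {y1, y2, y3}"
    using inj by (auto dest: injD)
  show ?thesis
  proof (cases "x \<in> {y1, y2, y3}")
    case True
    then show ?thesis
      using vertex unfolding Nprox_def by simp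
  next
    case False
    then show ?thesis
      unfolding Nprox_def using vertex vs vs' ratio homothety
      by (simp add: Let_def k_def tri_aff_map[OF assms(1)] image_Int[OF inj, symmetric])
  qed
qed

lemma rel_density_aff_map:
  assumes "linear L" "inj L" "cross2 (y2 - y1) (y3 - y1) \<noteq> 0"
    and "\<And>i. i < n \<Longrightarrow> X' i = aff_map L c (X i)"
  shows "rel_density r (aff_map L c y1) (aff_map L c y2) (aff_map L c y3) n X'
       = rel_density r y1 y2 y3 n X"
proof -
  have "{(i, j). i < n \<and> j < n \<and> i \<noteq> j \<and>
          X' j \<in> Nprox r (aff_map L c y1) (aff_map L c y2) (aff_map L c y3) (X' i)}
      = {(i, j). i < n \<and> j < n \<and> i \<noteq> j \<and> X j \<in> Nprox r y1 y2 y3 (X i)}"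
    using assms(4) Nprox_aff_map[OF assms(1-3)] inj_image_mem_iff[OF inj_aff_map[OF assms(2)]]
    by auto
  then show ?thesis
    unfolding rel_density_def by simp
qed

lemma borel_measurable_vec_nth [measurable (raw)]:
  "f \<in> borel_measurable M \<Longrightarrow> (\<lambda>x. (f x :: real^'n) $ i) \<in> borel_measurable M"
  by (rule measurable_compose[of f M borel "\<lambda>x. x $ i"])
     (auto intro!: borel_measurable_continuous_onI linear_continuous_on)

lemma borel_measurable_cross2 [measurable (raw)]:
  "f \<in> borel_measurable M \<Longrightarrow> g \<in> borel_measurable M \<Longrightarrow>
    (\<lambda>x. cross2 (f x) (g x)) \<in> borel_measurable M"
  unfolding cross2_def by (intro borel_measurable_diff borel_measurable_times borel_measurable_vec_nth)

lemma compact_tri: "compact (tri a b c)"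
  unfolding tri_def by (intro compact_convex_hull) auto

lemma tri_in_borel [measurable]: "tri a b c \<in> sets borel"
  by (simp add: borel_compact compact_tri)

lemma vregion_in_borel [measurable]: "vregion a b c \<in> sets borel"
  unfolding vregion_def by (intro borel_compact compact_convex_hull) auto

lemma vertices_in_borel [measurable]: "{a, b, c :: real^2} \<in> sets borel"
  by (intro borel_closed finite_imp_closed) auto

definition prox_ratio :: "ereal \<Rightarrow> real^2 \<Rightarrow> real^2 \<Rightarrow> real^2 \<Rightarrow> real^2 \<Rightarrow> real" where
  "prox_ratio r v a b x = real_of_ereal r * \<bar>cross2 (x - v) (b - a) / cross2 (a - v) (b - a)\<bar>"

text \<open>Membership in \<open>N\<^sup>r\<close> rewritten without \<open>infdist\<close> and images, as a Boolean combination
  of Borel conditions on the pair \<open>(x, w)\<close>; equations are phrased as \<open>_ \<in> {0}\<close> so that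
  the measurability prover can handle them.\<close>

definition in_prox_image :: "ereal \<Rightarrow> real^2 \<Rightarrow> real^2 \<Rightarrow> real^2 \<Rightarrow>
    real^2 \<Rightarrow> real^2 \<Rightarrow> real^2 \<Rightarrow> real^2 \<Rightarrow> real^2 \<Rightarrow> bool" where
  "in_prox_image r y1 y2 y3 v a b x w \<longleftrightarrow> w \<in> tri y1 y2 y3 \<and>
     ((prox_ratio r v a b x = 0 \<and> w - v \<in> {0}) \<or>
      (prox_ratio r v a b x \<noteq> 0 \<and> v + (1 / prox_ratio r v a b x) *\<^sub>R (w - v) \<in> tri y1 y2 y3))"

definition Nprox_pred :: "ereal \<Rightarrow> real^2 \<Rightarrow> real^2 \<Rightarrow> real^2 \<Rightarrow> real^2 \<Rightarrow> real^2 \<Rightarrow> bool" where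
  "Nprox_pred r y1 y2 y3 x w \<longleftrightarrow>
    (x \<in> {y1, y2, y3} \<and> w - x \<in> {0}) \<or>
    (x \<notin> {y1, y2, y3} \<and> ((r = \<infinity> \<and> w \<in> tri y1 y2 y3) \<or>
      (r \<noteq> \<infinity> \<and> ((x \<in> vregion y1 y2 y3 \<and> in_prox_image r y1 y2 y3 y1 y2 y3 x w) \<or>
        (x \<notin> vregion y1 y2 y3 \<and> x \<in> vregion y2 y1 y3 \<and> in_prox_image r y1 y2 y3 y2 y1 y3 x w) \<or>
        (x \<notin> vregion y1 y2 y3 \<and> x \<notin> vregion y2 y1 y3 \<and> in_prox_image r y1 y2 y3 y3 y1 y2 x w)))))"

lemma pred_Nprox_pred [measurable]:
  "Measurable.pred (borel \<Otimes>\<^sub>M borel) (\<lambda>p :: (real^2) \<times> (real^2). Nprox_pred r y1 y2 y3 (fst p) (snd p))"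
  unfolding Nprox_pred_def in_prox_image_def prox_ratio_def by measurable

lemma in_prox_image_iff:
  assumes "cross2 (a - v) (b - a) \<noteq> 0" "v \<in> tri y1 y2 y3"
  shows "in_prox_image r y1 y2 y3 v a b x w \<longleftrightarrow>
    w \<in> (\<lambda>u. v + (real_of_ereal r * infdist v (par_line x a b) / infdist v (par_line a a b)) *\<^sub>R (u - v))
           ` tri y1 y2 y3 \<inter> tri y1 y2 y3"
proof -
  let ?k = "prox_ratio r v a b x"
  have "x - v = (cross2 (x - v) (b - a) / cross2 (a - v) (b - a)) *\<^sub>R (a - v)
      + (cross2 (a - v) (x - v) / cross2 (a - v) (b - a)) *\<^sub>R (b - a)"
    by (rule cross2_decomposition[OF assms(1)])
  from infdist_par_line_ratio[OF this not_in_par_line_if_cross2_neq_0[OF assms(1)]]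
  have k: "real_of_ereal r * infdist v (par_line x a b) / infdist v (par_line a a b) = ?k"
    unfolding prox_ratio_def by (metis times_divide_eq_right)
  show ?thesis
  proof (cases "?k = 0")
    case True
    then have "(\<lambda>u. v + ?k *\<^sub>R (u - v)) ` tri y1 y2 y3 = {v}"
      using assms(2) by (auto simp: image_constant_conv)
    then show ?thesis
      unfolding k in_prox_image_def Int_iff using True by (simp add: conj_commute)
  next
    case False
    have "w \<in> (\<lambda>u. v + ?k *\<^sub>R (u - v)) ` tri y1 y2 y3 \<longleftrightarrow> v + (1 / ?k) *\<^sub>R (w - v) \<in> tri y1 y2 y3"
    proof
      assume "w \<in> (\<lambda>u. v + ?k *\<^sub>R (u - v)) ` tri y1 y2 y3"
      then obtain u where "u \<in> tri y1 y2 y3" "w = v + ?k *\<^sub>R (u - v)"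
        by auto
      then show "v + (1 / ?k) *\<^sub>R (w - v) \<in> tri y1 y2 y3"
        using False by simp
    next
      assume "v + (1 / ?k) *\<^sub>R (w - v) \<in> tri y1 y2 y3"
      moreover have "w = v + ?k *\<^sub>R ((v + (1 / ?k) *\<^sub>R (w - v)) - v)"
        using False by simp
      ultimately show "w \<in> (\<lambda>u. v + ?k *\<^sub>R (u - v)) ` tri y1 y2 y3"
        by blast
    qed
    then show ?thesis
      unfolding k in_prox_image_def Int_iff using False by blast
  qed
qed

lemma mem_Nprox_iff_Nprox_pred:
  assumes "cross2 (y2 - y1) (y3 - y1) \<noteq> 0"
  shows "w \<in> Nprox r y1 y2 y3 x \<longleftrightarrow> Nprox_pred r y1 y2 y3 x w"
proof -
  have "y1 \<in> tri y1 y2 y3" "y2 \<in> tri y1 y2 y3" "y3 \<in> tri y1 y2 y3"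
    unfolding tri_def by (auto intro: hull_inc)
  moreover have "cross2 (y2 - y1) (y3 - y2) \<noteq> 0" "cross2 (y1 - y2) (y3 - y1) \<noteq> 0"
      "cross2 (y1 - y3) (y2 - y1) \<noteq> 0"
    using cross2_vsel_neq_0[OF assms] by auto
  ultimately show ?thesis
    by (simp add: Nprox_def Nprox_pred_def vsel_def Let_def in_prox_image_iff)
qed

lemma card_offdiag_eq_sum:
  fixes n :: nat
  shows "real (card {(i, j). i < n \<and> j < n \<and> i \<noteq> j \<and> Q i j})
     = (\<Sum>i<n. \<Sum>j<n. if i \<noteq> j \<and> Q i j then 1 else 0)"
proof -
  have sigma: "{(i, j). i < n \<and> j < n \<and> i \<noteq> j \<and> Q i j} = (SIGMA i:{..<n}. {j \<in> {..<n}. i \<noteq> j \<and> Q i j})"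
    by auto
  have "real (card {(i, j). i < n \<and> j < n \<and> i \<noteq> j \<and> Q i j})
      = (\<Sum>i<n. real (card {j \<in> {..<n}. i \<noteq> j \<and> Q i j}))"
    unfolding sigma by simp
  also have "\<dots> = (\<Sum>i<n. \<Sum>j<n. if i \<noteq> j \<and> Q i j then 1 else 0)"
    by (simp add: sum.inter_filter[symmetric])
  finally show ?thesis .
qed

lemma borel_measurable_rel_density:
  assumes "cross2 (y2 - y1) (y3 - y1) \<noteq> 0"
  shows "rel_density r y1 y2 y3 n \<in> borel_measurable (PiM {..<n} (\<lambda>_. borel))"
proof -
  have pair: "(\<lambda>X. (X i, X j)) \<in> PiM {..<n} (\<lambda>_. borel) \<rightarrow>\<^sub>M (borel \<Otimes>\<^sub>M (borel :: (real^2) measure))"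
    if "i < n" "j < n" for i j
    using that by (intro measurable_Pair measurable_component_singleton) auto
  have "rel_density r y1 y2 y3 n = (\<lambda>X. (\<Sum>i<n. \<Sum>j<n.
      if i \<noteq> j \<and> Nprox_pred r y1 y2 y3 (X i) (X j) then 1 else 0) / (real n * (real n - 1)))"
    unfolding rel_density_def card_offdiag_eq_sum mem_Nprox_iff_Nprox_pred[OF assms] ..
  also have "\<dots> \<in> borel_measurable (PiM {..<n} (\<lambda>_. borel))"
    using measurable_compose[OF pair pred_Nprox_pred] by (simp add: o_def)
  finally show ?thesis .
qed

lemma borel_measurable_aff_map: "linear L \<Longrightarrow> aff_map L c \<in> borel_measurable borel"
  for L :: "'a::euclidean_space \<Rightarrow> 'b::euclidean_space"
  by (rule borel_measurable_continuous_onI[OF continuous_aff_map])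

lemma
  fixes L :: "real^'n::{finite,wellorder} \<Rightarrow> real^'n::_"
  assumes "linear L" "A \<in> lmeasurable"
  shows lmeasurable_aff_map_image: "aff_map L c ` A \<in> lmeasurable"
    and measure_aff_map_image: "measure lebesgue (aff_map L c ` A) = \<bar>det (matrix L)\<bar> * measure lebesgue A"
  unfolding aff_map_image measure_translation
  by (intro measurable_translation measurable_linear_image[OF assms])
     (rule measure_linear_image[OF assms])

lemma emeasure_lborel_eq_measure_lebesgue:
  assumes "A \<in> sets borel" "A \<in> lmeasurable"
  shows "emeasure lborel A = ennreal (measure lebesgue A)"
  using assms emeasure_eq_ennreal_measure[OF fmeasurableD2[OF assms(2)]] by simp

lemma prob_space_uniform_measure_compact:
  assumes "compact T" "measure lebesgue T > 0"
  shows "prob_space (uniform_measure lborel T)"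
  using assms
  by (intro prob_space_uniform_measure)
     (simp_all add: emeasure_lborel_eq_measure_lebesgue borel_compact lmeasurable_compact)

lemma measurable_uniform_measure_lborel:
  "measurable (uniform_measure lborel S) M = measurable borel M"
  "measurable M (uniform_measure lborel S) = measurable M borel"
  by (rule measurable_cong_sets; simp)+

lemma distr_uniform_measure_aff_map:
  fixes L :: "real^'n::{finite,wellorder} \<Rightarrow> real^'n::_"
  assumes L: "linear L" "inj L" and T: "compact T" "measure lebesgue T > 0"
  shows "distr (uniform_measure lborel T) borel (aff_map L c) = uniform_measure lborel (aff_map L c ` T)"
proof (rule measure_eqI)
  let ?f = "aff_map L c"
  fix B assume "B \<in> sets (distr (uniform_measure lborel T) borel ?f)"
  then have B: "B \<in> sets borel"
    by simp
  have f: "?f \<in> borel_measurable borel"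
    by (rule borel_measurable_aff_map[OF L(1)])
  have Tb: "T \<in> sets borel" and Tl: "T \<in> lmeasurable"
    using T(1) by (simp_all add: borel_compact lmeasurable_compact)
  have fTb: "?f ` T \<in> sets borel"
    using T(1) continuous_aff_map[OF L(1)]
    by (auto intro: borel_compact compact_continuous_image continuous_on_subset)
  define A where "A = T \<inter> ?f -` B"
  have Ab: "A \<in> sets borel"
    unfolding A_def using Tb measurable_sets_borel[OF f B] by simp
  have Al: "A \<in> lmeasurable"
    by (rule fmeasurableI2[OF Tl]) (use Ab in \<open>auto simp: A_def\<close>)
  have img: "?f ` A = ?f ` T \<inter> B"
    unfolding A_def using inj_aff_map[OF L(2), of c] by auto
  have fAb: "?f ` A \<in> sets borel"
    unfolding img using fTb B by simp
  have det: "\<bar>det (matrix L)\<bar> > 0"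
    using det_nz_iff_inj[OF L(1)] L(2) by simp
  have "?f \<in> uniform_measure lborel T \<rightarrow>\<^sub>M borel"
    using f by (simp add: measurable_uniform_measure_lborel)
  then have "emeasure (distr (uniform_measure lborel T) borel ?f) B
      = emeasure (uniform_measure lborel T) (?f -` B \<inter> space (uniform_measure lborel T))"
    using B by (intro emeasure_distr) auto
  also have "\<dots> = emeasure lborel A / emeasure lborel T"
    using Tb measurable_sets_borel[OF f B] by (simp add: A_def)
  also have "\<dots> = ennreal (measure lebesgue A) / ennreal (measure lebesgue T)"
    by (simp only: emeasure_lborel_eq_measure_lebesgue[OF Ab Al] emeasure_lborel_eq_measure_lebesgue[OF Tb Tl])
  also have "\<dots> = ennreal (\<bar>det (matrix L)\<bar> * measure lebesgue A)
      / ennreal (\<bar>det (matrix L)\<bar> * measure lebesgue T)"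
    using det T(2) by (simp add: divide_ennreal)
  also have "\<dots> = emeasure lborel (?f ` A) / emeasure lborel (?f ` T)"
    by (simp only: emeasure_lborel_eq_measure_lebesgue[OF fAb lmeasurable_aff_map_image[OF L(1) Al]]
        emeasure_lborel_eq_measure_lebesgue[OF fTb lmeasurable_aff_map_image[OF L(1) Tl]]
        measure_aff_map_image[OF L(1) Al] measure_aff_map_image[OF L(1) Tl])
  also have "\<dots> = emeasure (uniform_measure lborel (?f ` T)) B"
    unfolding img using fTb B by simp
  finally show "emeasure (distr (uniform_measure lborel T) borel ?f) B
      = emeasure (uniform_measure lborel (?f ` T)) B" .
qed simp

lemma measurable_compose_aff_map:
  fixes L :: "'a::euclidean_space \<Rightarrow> 'b::euclidean_space"
  assumes "linear L"
  shows "compose I (aff_map L c)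
    \<in> PiM I (\<lambda>_. uniform_measure lborel S) \<rightarrow>\<^sub>M PiM I (\<lambda>_. uniform_measure lborel S')"
  unfolding compose_def
proof (rule measurable_restrict)
  fix i assume "i \<in> I"
  then have "(\<lambda>X. X i) \<in> PiM I (\<lambda>_. uniform_measure lborel S) \<rightarrow>\<^sub>M uniform_measure lborel S"
    by (rule measurable_component_singleton)
  moreover have "aff_map L c \<in> uniform_measure lborel S \<rightarrow>\<^sub>M uniform_measure lborel S'"
    using borel_measurable_aff_map[OF assms] by (simp add: measurable_uniform_measure_lborel)
  ultimately show "(\<lambda>X. aff_map L c (X i))
      \<in> PiM I (\<lambda>_. uniform_measure lborel S) \<rightarrow>\<^sub>M uniform_measure lborel S'"
    by (rule measurable_compose)
qed

lemma distr_PiM_uniform_measure_aff_map: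
  fixes L :: "real^'n::{finite,wellorder} \<Rightarrow> real^'n::_"
  assumes L: "linear L" "inj L" and T: "compact T" "measure lebesgue T > 0" and "finite I"
  shows "distr (PiM I (\<lambda>_. uniform_measure lborel T)) (PiM I (\<lambda>_. uniform_measure lborel (aff_map L c ` T)))
      (compose I (aff_map L c)) = PiM I (\<lambda>_. uniform_measure lborel (aff_map L c ` T))"
proof -
  let ?f = "aff_map L c"
  have "measure lebesgue (?f ` T) > 0"
    using T det_nz_iff_inj[OF L(1)] L(2)
    by (simp add: measure_aff_map_image[OF L(1) lmeasurable_compact])
  moreover have "compact (?f ` T)"
    using T(1) continuous_aff_map[OF L(1)] by (auto intro: compact_continuous_image continuous_on_subset)
  ultimately have "prob_space (uniform_measure lborel (?f ` T))"
    by (intro prob_space_uniform_measure_compact)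
  moreover have "?f \<in> uniform_measure lborel T \<rightarrow>\<^sub>M uniform_measure lborel (?f ` T)"
    using borel_measurable_aff_map[OF L(1)] by (simp add: measurable_uniform_measure_lborel)
  ultimately have "distr (PiM I (\<lambda>_. uniform_measure lborel T)) (PiM I (\<lambda>_. uniform_measure lborel (?f ` T)))
      (compose I ?f) = PiM I (\<lambda>_. distr (uniform_measure lborel T) (uniform_measure lborel (?f ` T)) ?f)"
    using prob_space_uniform_measure_compact[OF T]
    by (intro distr_PiM_finite_prob_space[OF \<open>finite I\<close>] product_prob_spaceI)
  also have "distr (uniform_measure lborel T) (uniform_measure lborel (?f ` T)) ?f
      = distr (uniform_measure lborel T) borel ?f"
    by (rule distr_cong) simp_all
  finally show ?thesis
    unfolding distr_uniform_measure_aff_map[OF L T] .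
qed

lemma sets_iid_uniform: "sets (iid_uniform y1 y2 y3 n) = sets (PiM {..<n} (\<lambda>_. borel))"
  unfolding iid_uniform_def by (rule sets_PiM_cong) simp_all

lemma borel_measurable_rel_density_iid_uniform:
  "cross2 (y2 - y1) (y3 - y1) \<noteq> 0 \<Longrightarrow> rel_density r y1 y2 y3 n \<in> borel_measurable (iid_uniform y1 y2 y3 n)"
  unfolding measurable_cong_sets[OF sets_iid_uniform refl] by (rule borel_measurable_rel_density)

lemma distr_rel_density_aff_map:
  assumes L: "linear L" "inj L"
    and cross: "cross2 (y2 - y1) (y3 - y1) \<noteq> 0"
      "cross2 (aff_map L c y2 - aff_map L c y1) (aff_map L c y3 - aff_map L c y1) \<noteq> 0"
    and pos: "measure lebesgue (tri y1 y2 y3) > 0"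
  shows "distr (iid_uniform (aff_map L c y1) (aff_map L c y2) (aff_map L c y3) n) borel
          (rel_density r (aff_map L c y1) (aff_map L c y2) (aff_map L c y3) n)
       = distr (iid_uniform y1 y2 y3 n) borel (rel_density r y1 y2 y3 n)"
proof -
  let ?f = "aff_map L c"
  have iid: "distr (iid_uniform y1 y2 y3 n) (iid_uniform (?f y1) (?f y2) (?f y3) n) (compose {..<n} ?f)
      = iid_uniform (?f y1) (?f y2) (?f y3) n"
    unfolding iid_uniform_def tri_aff_map[OF L(1)]
    by (rule distr_PiM_uniform_measure_aff_map[OF L compact_tri pos]) simp
  have "compose {..<n} ?f \<in> iid_uniform y1 y2 y3 n \<rightarrow>\<^sub>M iid_uniform (?f y1) (?f y2) (?f y3) n"
    unfolding iid_uniform_def by (rule measurable_compose_aff_map[OF L(1)])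
  then have "distr (iid_uniform (?f y1) (?f y2) (?f y3) n) borel (rel_density r (?f y1) (?f y2) (?f y3) n)
      = distr (iid_uniform y1 y2 y3 n) borel (rel_density r (?f y1) (?f y2) (?f y3) n \<circ> compose {..<n} ?f)"
    using borel_measurable_rel_density_iid_uniform[OF cross(2)]
    by (subst iid[symmetric], intro distr_distr)
  also have "\<dots> = distr (iid_uniform y1 y2 y3 n) borel (rel_density r y1 y2 y3 n)"
    by (rule distr_cong) (simp_all add: rel_density_aff_map[OF L cross(1)] compose_def)
  finally show ?thesis .
qed

definition tri_frame :: "real^2 \<Rightarrow> real^2 \<Rightarrow> real^2 \<Rightarrow> real^2 \<Rightarrow> real^2" where
  "tri_frame y1 y2 y3 p = p$1 *\<^sub>R (y2 - y1) + p$2 *\<^sub>R (y3 - y1)"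

lemma linear_tri_frame: "linear (tri_frame y1 y2 y3)"
  unfolding tri_frame_def by (rule linearI) (simp_all add: algebra_simps)

lemma inj_tri_frame:
  assumes "cross2 (y2 - y1) (y3 - y1) \<noteq> 0"
  shows "inj (tri_frame y1 y2 y3)"
proof (rule injI)
  fix p q assume eq: "tri_frame y1 y2 y3 p = tri_frame y1 y2 y3 q"
  have "cross2 (tri_frame y1 y2 y3 z) (y3 - y1) = z$1 * cross2 (y2 - y1) (y3 - y1)"
       "cross2 (y2 - y1) (tri_frame y1 y2 y3 z) = z$2 * cross2 (y2 - y1) (y3 - y1)" for z
    unfolding tri_frame_def cross2_def by (simp_all add: algebra_simps)
  then have "p$1 = q$1" "p$2 = q$2"
    using eq assms by (metis mult_right_cancel)+
  then show "p = q"
    unfolding vec_eq_iff forall_2 by simp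
qed

lemma aff_map_tri_frame:
  "aff_map (tri_frame y1 y2 y3) y1 0 = y1"
  "aff_map (tri_frame y1 y2 y3) y1 (axis 1 1) = y2"
  "aff_map (tri_frame y1 y2 y3) y1 (axis 2 1) = y3"
  unfolding aff_map_def tri_frame_def by (simp_all add: axis_def)

lemma measure_standard_tri_pos: "measure lebesgue (tri 0 (axis 1 1) (axis 2 1)) > 0"
proof -
  let ?a = "(\<chi> i. 1/4) :: real^2" and ?b = "(\<chi> i. 1/2) :: real^2"
  have "cbox ?a ?b \<subseteq> tri 0 (axis 1 1) (axis 2 1)"
  proof
    fix p :: "real^2" assume "p \<in> cbox ?a ?b"
    then have "1/4 \<le> p$1" "p$1 \<le> 1/2" "1/4 \<le> p$2" "p$2 \<le> 1/2"
      unfolding mem_box_cart by (auto simp: forall_2)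
    moreover have "p = (1 - p$1 - p$2) *\<^sub>R 0 + p$1 *\<^sub>R axis 1 1 + p$2 *\<^sub>R axis 2 1"
      unfolding vec_eq_iff forall_2 by (simp add: axis_def)
    ultimately show "p \<in> tri 0 (axis 1 1) (axis 2 1)"
      unfolding tri_def convex_hull_3
      by (intro CollectI exI[of _ "1 - p$1 - p$2"] exI[of _ "p$1"] exI[of _ "p$2"]) simp
  qed
  then have "measure lebesgue (cbox ?a ?b) \<le> measure lebesgue (tri 0 (axis 1 1) (axis 2 1))"
    by (intro measure_mono_fmeasurable) (auto intro: lmeasurable_compact compact_tri)
  moreover have "measure lebesgue (cbox ?a ?b) > 0"
    by (simp add: content_cbox_if_cart interval_ne_empty_cart prod_pos)
  ultimately show ?thesis
    by linarith
qed

theorem theorem1: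
  fixes r :: ereal and n :: nat
  assumes "r \<ge> 1"
  shows "\<exists>\<mu> :: real measure. \<forall>y1 y2 y3 :: real^2. \<not> collinear {y1, y2, y3} \<longrightarrow>
           rel_density r y1 y2 y3 n \<in> borel_measurable (iid_uniform y1 y2 y3 n) \<and>
           distr (iid_uniform y1 y2 y3 n) borel (rel_density r y1 y2 y3 n) = \<mu>"
proof (intro exI allI impI conjI)
  fix y1 y2 y3 :: "real^2"
  assume "\<not> collinear {y1, y2, y3}"
  then have cross: "cross2 (y2 - y1) (y3 - y1) \<noteq> 0"
    using collinear_if_cross2_eq_0 by blast
  then show "rel_density r y1 y2 y3 n \<in> borel_measurable (iid_uniform y1 y2 y3 n)"
    by (rule borel_measurable_rel_density_iid_uniform)
  have "cross2 (axis 1 1 - 0) (axis 2 1 - 0) \<noteq> 0"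
    by (simp add: cross2_def axis_def)
  from distr_rel_density_aff_map[OF linear_tri_frame inj_tri_frame[OF cross] this, of y1 n r]
  show "distr (iid_uniform y1 y2 y3 n) borel (rel_density r y1 y2 y3 n)
      = distr (iid_uniform 0 (axis 1 1) (axis 2 1) n) borel (rel_density r 0 (axis 1 1) (axis 2 1) n)"
    using cross measure_standard_tri_pos by (simp add: aff_map_tri_frame)
qed

end
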